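(* Let $n\ge4$. (i) A polyphenyl hexagonal chain $\overline{G}_n$ with $n$ hexagons has the minimum (respectively, second minimal, third minimal) Wiener index among all polyphenyl hexagonal chains with $n$ hexagons if and only if its hexagonal squeeze $G_n$ has the minimum (respectively, second minimal, third minimal) Wiener index among all spiro hexagonal chains with $n$ hexagons. (ii) $\overline{G}_n$ has the maximum (respectively, second maximal, third maximal) Wiener index among all polyphenyl hexagonal chains with $n$ hexagons if and only if $G_n$ has the maximum (respectively, second maximal, third maximal) Wiener index among all spiro hexagonal chains with $n$ hexagons.
   Context: The Wiener index is $W(G)=\sum_{\{u,v\}\subseteq V(G)}d_G(u,v)$, $d_G$ the shortest-path distance. A spiro hexagonal chain with $n$ hexagons is a connected graph whose blocks are $n$ hexagons (6-cycles) $H_0,\dots,H_{n-1}$, where $H_{k-1}$ and $H_k$ share exactly one cut-vertex for $1\le k\le n-1$, each cut-vertex is shared by exactly two hexagons and each hexagon has at most two cut-vertices. A polyphenyl hexagonal chain $\overline{G}_n=\overline{H}_0\cdots\overline{H}_{n-1}$ consists of pairwise vertex-disjoint hexagons together with cut-edges: $\overline{G}_1=\overline{H}_0$, and for $k\ge1$, $\overline{G}_{k+1}$ is obtained from $\overline{G}_k$ by adding $\overline{H}_k$ and a cut-edge joining a vertex $c_k$ of $\overline{H}_k$ to a vertex $t_k$ of $\overline{H}_{k-1}$, with $t_k\ne c_{k-1}$ for $k\ge2$. The hexagonal squeeze of $\overline{G}_n$ is the spiro hexagonal chain obtained by contracting each cut-edge $c_kt_k$ to a vertex; this gives a bijection (up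 to isomorphism) between polyphenyl and spiro hexagonal chains with $n$ hexagons. Chains are considered up to isomorphism. *)

theory Defs
  imports Main
begin

inductive walk_len :: "'a set \<Rightarrow> ('a \<Rightarrow> 'a \<Rightarrow> bool) \<Rightarrow> nat \<Rightarrow> 'a \<Rightarrow> 'a \<Rightarrow> bool"
  for V E where
  wl0: "v \<in> V \<Longrightarrow> walk_len V E 0 v v"
| wlS: "walk_len V E m u w \<Longrightarrow> E w v \<Longrightarrow> v \<in> V \<Longrightarrow> walk_len V E (Suc m) u v"

definition gdist :: "'a set \<Rightarrow> ('a \<Rightarrow> 'a \<Rightarrow> bool) \<Rightarrow> 'a \<Rightarrow> 'a \<Rightarrow> nat" where
  "gdist V E u v = (LEAST m. walk_len V E m u v)"

(* Wiener index: sum over unordered pairs = half the sum over ordered pairs *)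
definition wiener :: "'a set \<Rightarrow> ('a \<Rightarrow> 'a \<Rightarrow> bool) \<Rightarrow> nat" where
  "wiener V E = (\<Sum>u\<in>V. \<Sum>v\<in>V. gdist V E u v) div 2"

(* Hexagon k has vertices (k,0),...,(k,5), forming the 6-cycle (k,i)-(k,(i+1) mod 6). *)
definition hex_adj :: "nat \<times> nat \<Rightarrow> nat \<times> nat \<Rightarrow> bool" where
  "hex_adj x y \<longleftrightarrow> fst x = fst y \<and>
     (snd y = (snd x + 1) mod 6 \<or> snd x = (snd y + 1) mod 6)"

definition hex_vertices :: "nat \<Rightarrow> (nat \<times> nat) set" where
  "hex_vertices n = {(k, i). k < n \<and> i < 6}"

(* Valid chain data: c k = vertex c_k of hexagon k, t k = vertex t_k of hexagon k-1
   (for 1 <= k <= n-1), with t_k ~= c_{k-1} for k >= 2. *)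
definition chain_param :: "nat \<Rightarrow> (nat \<Rightarrow> nat) \<Rightarrow> (nat \<Rightarrow> nat) \<Rightarrow> bool" where
  "chain_param n c t \<longleftrightarrow> (\<forall>k<n. c k < 6 \<and> t k < 6) \<and>
     (\<forall>k. 2 \<le> k \<and> k < n \<longrightarrow> t k \<noteq> c (k - 1))"

definition poly_V :: "nat \<Rightarrow> (nat \<times> nat) set" where
  "poly_V n = hex_vertices n"

definition poly_E :: "nat \<Rightarrow> (nat \<Rightarrow> nat) \<Rightarrow> (nat \<Rightarrow> nat) \<Rightarrow> nat \<times> nat \<Rightarrow> nat \<times> nat \<Rightarrow> bool" where
  "poly_E n c t x y \<longleftrightarrow> x \<in> poly_V n \<and> y \<in> poly_V n \<and>
     (hex_adj x y \<or> (\<exists>k. 1 \<le> k \<and> k < n \<and>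
        ((x = (k, c k) \<and> y = (k - 1, t k)) \<or> (y = (k, c k) \<and> x = (k - 1, t k)))))"

(* Hexagonal squeeze / spiro chain: contract every cut-edge, i.e. identify
   vertex (k, c k) of hexagon k with vertex (k-1, t k) of hexagon k-1. *)
definition spiro_rep :: "(nat \<Rightarrow> nat) \<Rightarrow> (nat \<Rightarrow> nat) \<Rightarrow> nat \<times> nat \<Rightarrow> nat \<times> nat" where
  "spiro_rep c t x = (if 1 \<le> fst x \<and> snd x = c (fst x) then (fst x - 1, t (fst x)) else x)"

definition spiro_V :: "nat \<Rightarrow> (nat \<Rightarrow> nat) \<Rightarrow> (nat \<Rightarrow> nat) \<Rightarrow> (nat \<times> nat) set" where
  "spiro_V n c t = spiro_rep c t ` hex_vertices n"

definition spiro_E :: "nat \<Rightarrow> (nat \<Rightarrow> nat) \<Rightarrow> (nat \<Rightarrow> nat) \<Rightarrow> nat \<times> nat \<Rightarrow> nat \<times> nat \<Rightarrow> bool" where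
  "spiro_E n c t x y \<longleftrightarrow> (\<exists>a b. a \<in> hex_vertices n \<and> b \<in> hex_vertices n \<and> hex_adj a b \<and>
      x = spiro_rep c t a \<and> y = spiro_rep c t b)"

definition W_poly :: "nat \<Rightarrow> (nat \<Rightarrow> nat) \<Rightarrow> (nat \<Rightarrow> nat) \<Rightarrow> nat" where
  "W_poly n c t = wiener (poly_V n) (poly_E n c t)"

definition W_spiro :: "nat \<Rightarrow> (nat \<Rightarrow> nat) \<Rightarrow> (nat \<Rightarrow> nat) \<Rightarrow> nat" where
  "W_spiro n c t = wiener (spiro_V n c t) (spiro_E n c t)"

definition poly_values :: "nat \<Rightarrow> nat set" where
  "poly_values n = {W_poly n c t | c t. chain_param n c t}"

definition spiro_values :: "nat \<Rightarrow> nat set" where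
  "spiro_values n = {W_spiro n c t | c t. chain_param n c t}"

(* j-th smallest / largest element (j = 0 is the minimum / maximum) *)
definition kth_min :: "nat set \<Rightarrow> nat \<Rightarrow> nat" where
  "kth_min A j = sorted_list_of_set A ! j"

definition kth_max :: "nat set \<Rightarrow> nat \<Rightarrow> nat" where
  "kth_max A j = rev (sorted_list_of_set A) ! j"

end

theory Submission
  imports Defs
begin

text \<open>Distances in both chains are explicit. To go from hexagon \<open>i\<close> to hexagon \<open>j > i\<close>
  one walks inside hexagon \<open>i\<close> to its exit \<open>t\<^sub>i\<^sub>+\<^sub>1\<close>, crosses the \<open>j - i\<close> links (of
  length 1 for a cut-edge, 0 after the squeeze), traverses every hexagon \<open>k\<close> strictly in
  between at cost \<open>gap k = d(c\<^sub>k, t\<^sub>k\<^sub>+\<^sub>1)\<close>, and finally walks inside hexagon \<open>j\<close> from \<open>c\<^sub>j\<close>.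
  Summing over all pairs, every term except the gaps is the same for all chains. Adding the
  hexagons one at a time, this gives \<open>W(polyphenyl) = \<alpha>\<^sub>n + 36 X\<close> and
  \<open>W(spiro) = \<beta>\<^sub>n + 25 X\<close> for one and the same quantity \<open>X = \<Sum>\<^sub>i\<^sub><\<^sub>k\<^sub><\<^sub>m gap k\<close> of the
  chain. Both Wiener indices are therefore strictly increasing functions of \<open>X\<close>, so a chain
  and its squeeze have the same rank. The constant chains with gaps 1, 2, 3 show that \<open>X\<close>
  takes at least three values.\<close>

definition cyc_dist :: "nat \<Rightarrow> nat \<Rightarrow> nat" where
  "cyc_dist a b = min ((a + 6 - b) mod 6) ((b + 6 - a) mod 6)"

lemma less_6_cases: "a < (6::nat) \<Longrightarrow> a = 0 \<or> a = 1 \<or> a = 2 \<or> a = 3 \<or> a = 4 \<or> a = 5"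
  by auto

lemma cyc_dist_commute: "cyc_dist a b = cyc_dist b a"
  by (simp add: cyc_dist_def min.commute)

lemma cyc_dist_self [simp]: "cyc_dist a a = 0"
  by (simp add: cyc_dist_def)

lemma cyc_dist_le_3:
  assumes "a < 6" "b < 6" shows "cyc_dist a b \<le> 3"
  using less_6_cases[OF assms(1)] less_6_cases[OF assms(2)] by (elim disjE) (simp_all add: cyc_dist_def)

lemma cyc_dist_Suc_le:
  assumes "p < 6" "b < 6" shows "cyc_dist p (Suc b mod 6) \<le> cyc_dist p b + 1"
  using less_6_cases[OF assms(1)] less_6_cases[OF assms(2)] by (elim disjE) (simp_all add: cyc_dist_def)

lemma cyc_dist_le_Suc:
  assumes "p < 6" "b < 6" shows "cyc_dist p b \<le> cyc_dist p (Suc b mod 6) + 1"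
  using less_6_cases[OF assms(1)] less_6_cases[OF assms(2)] by (elim disjE) (simp_all add: cyc_dist_def)

lemma cyc_dist_hex_adj:
  assumes "hex_adj (j, b) (j', b')" "p < 6" "b < 6" "b' < 6"
  shows "cyc_dist p b' \<le> cyc_dist p b + 1"
  using assms cyc_dist_Suc_le[of p b] cyc_dist_le_Suc[of p b'] by (auto simp: hex_adj_def)

lemma cyc_dist_descent:
  assumes "p < 6" "b < 6" "p \<noteq> b"
  shows "\<exists>b'<6. hex_adj (j, b') (j, b) \<and> cyc_dist p b' + 1 = cyc_dist p b
                \<and> cyc_dist b' p + 1 = cyc_dist b p"
proof -
  define b' where "b' = (if (p + 6 - b) mod 6 \<le> 3 then Suc b mod 6 else (b + 5) mod 6)"
  have "b' < 6 \<and> (b' = Suc b mod 6 \<or> b = Suc b' mod 6) \<and> cyc_dist p b' + 1 = cyc_dist p b"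
    using less_6_cases[OF assms(1)] less_6_cases[OF assms(2)] assms(3) unfolding b'_def
    by (elim disjE) (simp_all add: cyc_dist_def)
  then show ?thesis by (auto simp: hex_adj_def cyc_dist_commute)
qed

lemma cyc_dist_sum:
  assumes "p < 6" shows "(\<Sum>b<6. cyc_dist p b) = 9"
  using less_6_cases[OF assms] by (elim disjE) (simp_all add: cyc_dist_def lessThan_nat_numeral)

lemma cyc_dist_sum': "p < 6 \<Longrightarrow> (\<Sum>b<6. cyc_dist b p) = 9"
  using cyc_dist_sum[of p] by (simp add: cyc_dist_commute)

lemma walk_len_in: "walk_len V E m u v \<Longrightarrow> u \<in> V \<and> v \<in> V"
  by (induction rule: walk_len.induct) auto

lemma walk_len_potential_le:
  assumes lip: "\<And>x y. x \<in> V \<Longrightarrow> y \<in> V \<Longrightarrow> E x y \<Longrightarrow> f y \<le> f x + 1"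
    and "walk_len V E m u v"
  shows "f v \<le> f u + m"
  using assms(2)
proof (induction rule: walk_len.induct)
  case (wlS m u w v)
  have "w \<in> V" using walk_len_in[OF wlS.hyps(1)] by blast
  then have "f v \<le> f w + 1" using lip wlS.hyps(2,3) by blast
  with wlS.IH show ?case by simp
qed simp

lemma walk_len_potential:
  assumes u: "u \<in> V" and f0: "f u = 0"
    and pred: "\<And>v. v \<in> V \<Longrightarrow> v \<noteq> u \<Longrightarrow> \<exists>y\<in>V. E y v \<and> f y + 1 = f v"
  shows "v \<in> V \<Longrightarrow> walk_len V E (f v) u v"
proof (induction "f v" arbitrary: v)
  case 0
  have "v = u"
  proof (rule ccontr)
    assume "v \<noteq> u"
    then obtain y where "f y + 1 = f v" using pred[OF 0(2)] by blast
    with 0(1) show False by simp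
  qed
  then show ?case using u 0(1) walk_len.wl0 by metis
next
  case (Suc m)
  then have "v \<noteq> u" using f0 by auto
  then obtain y where y: "y \<in> V" "E y v" "f y + 1 = f v" using pred[OF Suc(3)] by blast
  then have "walk_len V E (f y) u y" using Suc by simp
  then show ?case using y Suc(3) walk_len.wlS by fastforce
qed

lemma gdist_eq_potential:
  assumes "u \<in> V" "f u = 0"
    and "\<And>x y. x \<in> V \<Longrightarrow> y \<in> V \<Longrightarrow> E x y \<Longrightarrow> f y \<le> f x + 1"
    and "\<And>v. v \<in> V \<Longrightarrow> v \<noteq> u \<Longrightarrow> \<exists>y\<in>V. E y v \<and> f y + 1 = f v"
    and "v \<in> V"
  shows "gdist V E u v = f v"
  unfolding gdist_def
proof (rule Least_equality)
  show "walk_len V E (f v) u v" by (rule walk_len_potential[OF assms(1,2,4,5)])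
  show "f v \<le> m" if "walk_len V E m u v" for m
    using walk_len_potential_le[where f = f, OF assms(3) that] assms(2) by simp
qed

definition gap :: "(nat \<Rightarrow> nat) \<Rightarrow> (nat \<Rightarrow> nat) \<Rightarrow> nat \<Rightarrow> nat" where
  "gap c t k = cyc_dist (c k) (t (Suc k))"

definition gap_sum :: "(nat \<Rightarrow> nat) \<Rightarrow> (nat \<Rightarrow> nat) \<Rightarrow> nat \<Rightarrow> nat \<Rightarrow> nat" where
  "gap_sum c t p q = (\<Sum>k\<in>{p..<q}. gap c t k)"

text \<open>The candidate distance between \<open>(i, a)\<close> and \<open>(j, b)\<close>; \<open>e\<close> is the length of the link
  between consecutive hexagons: 1 for the polyphenyl chain, 0 for its squeeze.\<close>

definition chain_dist ::
    "nat \<Rightarrow> (nat \<Rightarrow> nat) \<Rightarrow> (nat \<Rightarrow> nat) \<Rightarrow> nat \<times> nat \<Rightarrow> nat \<times> nat \<Rightarrow> nat" where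
  "chain_dist e c t x y =
     (if fst x = fst y then cyc_dist (snd x) (snd y)
      else if fst x < fst y then cyc_dist (snd x) (t (Suc (fst x))) + e * (fst y - fst x)
             + gap_sum c t (Suc (fst x)) (fst y) + cyc_dist (c (fst y)) (snd y)
      else cyc_dist (snd y) (t (Suc (fst y))) + e * (fst x - fst y)
             + gap_sum c t (Suc (fst y)) (fst x) + cyc_dist (c (fst x)) (snd x))"

lemma gap_sum_empty [simp]: "gap_sum c t p p = 0"
  by (simp add: gap_sum_def)

lemma gap_sum_Suc_right: "p \<le> q \<Longrightarrow> gap_sum c t p (Suc q) = gap_sum c t p q + gap c t q"
  by (simp add: gap_sum_def)

lemma gap_sum_Suc_left: "p < q \<Longrightarrow> gap_sum c t p q = gap c t p + gap_sum c t (Suc p) q"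
  by (simp add: gap_sum_def sum.atLeast_Suc_lessThan)

lemma chain_dist_commute: "chain_dist e c t x y = chain_dist e c t y x"
  by (auto simp: chain_dist_def cyc_dist_commute)

lemma chain_dist_self [simp]: "chain_dist e c t x x = 0"
  by (simp add: chain_dist_def)

lemma chain_dist_same: "chain_dist e c t (i, a) (i, b) = cyc_dist a b"
  by (simp add: chain_dist_def)

lemma chain_dist_less: "i < j \<Longrightarrow> chain_dist e c t (i, a) (j, b) =
    cyc_dist a (t (Suc i)) + e * (j - i) + gap_sum c t (Suc i) j + cyc_dist (c j) b"
  by (simp add: chain_dist_def)

lemma chain_dist_greater: "j < i \<Longrightarrow> chain_dist e c t (i, a) (j, b) =
    cyc_dist b (t (Suc j)) + e * (i - j) + gap_sum c t (Suc j) i + cyc_dist (c i) a"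
  by (simp add: chain_dist_def)

lemma chain_dist_link_up:
  assumes "i \<le> k"
  shows "chain_dist e c t (i, a) (Suc k, c (Suc k)) = chain_dist e c t (i, a) (k, t (Suc k)) + e"
proof (cases "i = k")
  case True
  then show ?thesis by (simp add: chain_dist_less chain_dist_same)
next
  case False
  with assms have "i < k" by simp
  then show ?thesis
    by (simp add: chain_dist_less gap_sum_Suc_right Suc_diff_le gap_def)
qed

lemma chain_dist_link_down:
  assumes "Suc k \<le> i"
  shows "chain_dist e c t (i, a) (k, t (Suc k)) = chain_dist e c t (i, a) (Suc k, c (Suc k)) + e"
proof (cases "i = Suc k")
  case True
  then show ?thesis by (simp add: chain_dist_greater chain_dist_same cyc_dist_commute)
next
  case False
  with assms have "Suc k < i" by simp
  moreover have "i - k = Suc (i - Suc k)" using assms by simp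
  ultimately show ?thesis
    by (simp add: chain_dist_greater gap_sum_Suc_left gap_def)
qed

lemma chain_dist_link:
  "chain_dist e c t x (Suc k, c (Suc k)) \<le> chain_dist e c t x (k, t (Suc k)) + e \<and>
   chain_dist e c t x (k, t (Suc k)) \<le> chain_dist e c t x (Suc k, c (Suc k)) + e"
proof (cases x)
  case (Pair i a)
  show ?thesis
  proof (cases "i \<le> k")
    case True
    then show ?thesis using chain_dist_link_up[OF True, of e c t a] Pair by simp
  next
    case False
    then have "Suc k \<le> i" by simp
    then show ?thesis using chain_dist_link_down[of k i e c t a] Pair by simp
  qed
qed

lemma chain_dist_hex_adj:
  assumes rng: "\<forall>k<n. c k < 6 \<and> t k < 6" and "i < n" "j < n" "a < 6" "b < 6" "b' < 6"
    and adj: "hex_adj (j, b) (j, b')"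
  shows "chain_dist e c t (i, a) (j, b') \<le> chain_dist e c t (i, a) (j, b) + 1"
proof -
  consider "i = j" | "i < j" | "j < i" by linarith
  then show ?thesis
  proof cases
    case 1
    then show ?thesis using cyc_dist_hex_adj[OF adj] assms by (simp add: chain_dist_same)
  next
    case 2
    then show ?thesis using cyc_dist_hex_adj[OF adj, of "c j"] assms by (simp add: chain_dist_less)
  next
    case 3
    then show ?thesis using cyc_dist_hex_adj[OF adj, of "t (Suc j)"] assms
      by (simp add: chain_dist_greater cyc_dist_commute[of _ "t (Suc j)"])
  qed
qed

lemma chain_param_range: "chain_param n c t \<Longrightarrow> k < n \<Longrightarrow> c k < 6 \<and> t k < 6"
  by (simp add: chain_param_def)

lemma mem_hex_vertices: "x \<in> hex_vertices n \<longleftrightarrow> fst x < n \<and> snd x < 6"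
  by (cases x) (simp add: hex_vertices_def)

text \<open>The vertex of hexagon \<open>j\<close> through which shortest walks from \<open>x\<close> enter it.\<close>

definition chain_entry :: "(nat \<Rightarrow> nat) \<Rightarrow> (nat \<Rightarrow> nat) \<Rightarrow> nat \<times> nat \<Rightarrow> nat \<Rightarrow> nat" where
  "chain_entry c t x j = (if j = fst x then snd x else if fst x < j then c j else t (Suc j))"

lemma chain_dist_via_entry:
  "chain_dist e c t x (j, b) = chain_dist e c t x (j, chain_entry c t x j) + cyc_dist (chain_entry c t x j) b"
  by (cases x) (auto simp: chain_dist_def chain_entry_def cyc_dist_commute)

lemma chain_entry_less_6:
  assumes "chain_param n c t" "x \<in> hex_vertices n" "j < n"
  shows "chain_entry c t x j < 6"
  using assms chain_param_range[OF assms(1)] by (auto simp: chain_entry_def mem_hex_vertices)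

lemma chain_dist_descent_in_hex:
  assumes ch: "chain_param n c t" and x: "x \<in> hex_vertices n" and "j < n" "b < 6"
    and b: "b \<noteq> chain_entry c t x j"
  shows "\<exists>b'<6. hex_adj (j, b') (j, b) \<and> chain_dist e c t x (j, b') + 1 = chain_dist e c t x (j, b)"
proof -
  have "chain_entry c t x j < 6" using chain_entry_less_6[OF ch x] assms(3) .
  then obtain b' where "b' < 6" "hex_adj (j, b') (j, b)"
      "cyc_dist (chain_entry c t x j) b' + 1 = cyc_dist (chain_entry c t x j) b"
    using cyc_dist_descent[OF _ assms(4) b[symmetric]] by blast
  then show ?thesis by (metis chain_dist_via_entry add.assoc)
qed

lemma poly_E_chain_dist_le:
  assumes ch: "chain_param n c t" and x: "x \<in> hex_vertices n" and E: "poly_E n c t y z"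
  shows "chain_dist 1 c t x z \<le> chain_dist 1 c t x y + 1"
proof -
  obtain i a where xe: "x = (i, a)" by (cases x)
  obtain j b where ye: "y = (j, b)" by (cases y)
  obtain j' b' where ze: "z = (j', b')" by (cases z)
  have bounds: "i < n" "a < 6" "j < n" "b < 6" "j' < n" "b' < 6"
    using x E xe ye ze by (auto simp: poly_E_def poly_V_def mem_hex_vertices)
  from E consider "hex_adj y z"
    | k where "y = (Suc k, c (Suc k))" "z = (k, t (Suc k))"
    | k where "z = (Suc k, c (Suc k))" "y = (k, t (Suc k))"
    unfolding poly_E_def by (metis Suc_pred' less_eq_Suc_le One_nat_def)
  then show ?thesis
  proof cases
    case 1
    then have "hex_adj (j, b) (j, b')" "j' = j" using ye ze by (auto simp: hex_adj_def)
    then show ?thesis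
      using chain_dist_hex_adj[OF _ bounds(1,3,2,4,6)] ch xe ye ze by (auto simp: chain_param_def)
  qed (use chain_dist_link[of 1 c t x] in auto)
qed

lemma poly_E_cut_edge:
  assumes "chain_param n c t" "Suc k < n"
  shows "poly_E n c t (Suc k, c (Suc k)) (k, t (Suc k))" "poly_E n c t (k, t (Suc k)) (Suc k, c (Suc k))"
proof -
  have "(Suc k, c (Suc k)) \<in> poly_V n" "(k, t (Suc k)) \<in> poly_V n"
    using chain_param_range[OF assms] assms(2) by (simp_all add: poly_V_def mem_hex_vertices)
  moreover have "\<exists>k'. 1 \<le> k' \<and> k' < n \<and> (Suc k, c (Suc k)) = (k', c k') \<and> (k, t (Suc k)) = (k' - 1, t k')"
    using assms(2) by (intro exI[of _ "Suc k"]) simp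
  ultimately show "poly_E n c t (Suc k, c (Suc k)) (k, t (Suc k))" "poly_E n c t (k, t (Suc k)) (Suc k, c (Suc k))"
    unfolding poly_E_def by blast+
qed

lemma poly_E_descent:
  assumes ch: "chain_param n c t" and x: "x \<in> hex_vertices n"
    and v: "v \<in> hex_vertices n" and "v \<noteq> x"
  shows "\<exists>y\<in>poly_V n. poly_E n c t y v \<and> chain_dist 1 c t x y + 1 = chain_dist 1 c t x v"
proof -
  obtain i a where xe: "x = (i, a)" by (cases x)
  obtain j b where ve: "v = (j, b)" by (cases v)
  have bounds: "i < n" "a < 6" "j < n" "b < 6" using x v xe ve by (auto simp: mem_hex_vertices)
  show ?thesis
  proof (cases "b = chain_entry c t x j")
    case False
    then obtain b' where "b' < 6" "hex_adj (j, b') (j, b)"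
        "chain_dist 1 c t x (j, b') + 1 = chain_dist 1 c t x (j, b)"
      using chain_dist_descent_in_hex[OF ch x bounds(3,4)] by blast
    then show ?thesis using bounds ve
      by (intro bexI[of _ "(j, b')"]) (auto simp: poly_E_def poly_V_def mem_hex_vertices)
  next
    case True
    then consider "i < j" "b = c j" | "j < i" "b = t (Suc j)"
      using \<open>v \<noteq> x\<close> xe ve by (auto simp: chain_entry_def split: if_splits)
    then show ?thesis
    proof cases
      case 1
      then obtain k where k: "j = Suc k" "i \<le> k" by (cases j) auto
      have "(k, t j) \<in> poly_V n"
        using chain_param_range[OF ch bounds(3)] k bounds by (simp add: poly_V_def mem_hex_vertices)
      then show ?thesis using chain_dist_link_up[OF k(2), of 1 c t a] poly_E_cut_edge[OF ch] 1 k bounds xe ve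
        by (intro bexI[of _ "(k, t j)"]) auto
    next
      case 2
      have "(Suc j, c (Suc j)) \<in> poly_V n"
        using chain_param_range[OF ch] 2 bounds by (simp add: poly_V_def mem_hex_vertices)
      then show ?thesis using chain_dist_link_down[of j i 1 c t a] poly_E_cut_edge[OF ch] 2 bounds xe ve
        by (intro bexI[of _ "(Suc j, c (Suc j))"]) auto
    qed
  qed
qed

lemma poly_gdist:
  assumes "chain_param n c t" "x \<in> hex_vertices n" "y \<in> hex_vertices n"
  shows "gdist (poly_V n) (poly_E n c t) x y = chain_dist 1 c t x y"
  unfolding poly_V_def
proof (rule gdist_eq_potential)
  show "chain_dist 1 c t x z \<le> chain_dist 1 c t x y + 1" if "poly_E n c t y z" for y z
    using poly_E_chain_dist_le[OF assms(1,2) that] .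
  show "\<exists>y\<in>hex_vertices n. poly_E n c t y v \<and> chain_dist 1 c t x y + 1 = chain_dist 1 c t x v"
    if "v \<in> hex_vertices n" "v \<noteq> x" for v
    using poly_E_descent[OF assms(1,2) that] by (simp add: poly_V_def)
qed (use assms in auto)

text \<open>The squeeze merges vertex \<open>c\<^sub>i\<close> of hexagon \<open>i \<ge> 1\<close> into \<open>t\<^sub>i\<close> of hexagon \<open>i - 1\<close>, and
  \<^const>\<open>spiro_rep\<close> represents the merged vertex by the latter.\<close>

definition spiro_slots :: "(nat \<Rightarrow> nat) \<Rightarrow> nat \<Rightarrow> nat set" where
  "spiro_slots c i = {a. a < 6 \<and> \<not> (1 \<le> i \<and> a = c i)}"

lemma spiro_rep_id: "x \<in> Sigma {..<n} (spiro_slots c) \<Longrightarrow> spiro_rep c t x = x"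
  by (cases x) (auto simp: spiro_slots_def spiro_rep_def)

lemma spiro_rep_in:
  assumes ch: "chain_param n c t" and x: "x \<in> hex_vertices n"
  shows "spiro_rep c t x \<in> Sigma {..<n} (spiro_slots c)"
proof (cases "1 \<le> fst x \<and> snd x = c (fst x)")
  case True
  then obtain k where k: "fst x = Suc k" by (cases "fst x") auto
  then have "Suc k < n" using x by (simp add: mem_hex_vertices)
  then have "t (Suc k) < 6" "1 \<le> k \<longrightarrow> t (Suc k) \<noteq> c k"
    using ch unfolding chain_param_def by (auto dest: spec[of _ "Suc k"])
  then show ?thesis using True k \<open>Suc k < n\<close> by (simp add: spiro_rep_def spiro_slots_def)
next
  case False
  then show ?thesis using x by (cases x) (auto simp: spiro_rep_def spiro_slots_def mem_hex_vertices)
qed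

lemma spiro_V_eq:
  assumes "chain_param n c t" shows "spiro_V n c t = Sigma {..<n} (spiro_slots c)"
proof
  show "spiro_V n c t \<subseteq> Sigma {..<n} (spiro_slots c)"
    using spiro_rep_in[OF assms] unfolding spiro_V_def by blast
  show "Sigma {..<n} (spiro_slots c) \<subseteq> spiro_V n c t"
  proof
    fix x assume x: "x \<in> Sigma {..<n} (spiro_slots c)"
    then have "x \<in> hex_vertices n" by (auto simp: spiro_slots_def hex_vertices_def)
    then show "x \<in> spiro_V n c t" unfolding spiro_V_def using spiro_rep_id[OF x, where t = t] by (metis image_eqI)
  qed
qed

lemma chain_dist_spiro_rep: "chain_dist 0 c t x (spiro_rep c t q) = chain_dist 0 c t x q"
proof (cases "1 \<le> fst q \<and> snd q = c (fst q)")
  case True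
  then obtain k where "fst q = Suc k" by (cases "fst q") auto
  with True have "q = (Suc k, c (Suc k))" by (cases q) auto
  then show ?thesis using chain_dist_link[of 0 c t x k] by (simp add: spiro_rep_def)
next
  case False
  then show ?thesis by (auto simp: spiro_rep_def)
qed

lemma spiro_E_chain_dist_le:
  assumes ch: "chain_param n c t" and x: "x \<in> hex_vertices n" and E: "spiro_E n c t y z"
  shows "chain_dist 0 c t x z \<le> chain_dist 0 c t x y + 1"
proof -
  obtain p q where pq: "p \<in> hex_vertices n" "q \<in> hex_vertices n" "hex_adj p q"
      "y = spiro_rep c t p" "z = spiro_rep c t q"
    using E unfolding spiro_E_def by blast
  obtain i a where xe: "x = (i, a)" by (cases x)
  obtain j b where pe: "p = (j, b)" by (cases p)
  obtain j' b' where qe: "q = (j', b')" by (cases q)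
  have "hex_adj (j, b) (j, b')" "j' = j" using pq(3) pe qe by (auto simp: hex_adj_def)
  then have "chain_dist 0 c t x q \<le> chain_dist 0 c t x p + 1"
    using chain_dist_hex_adj[of n c t i j a b b'] ch x pq(1,2) xe pe qe
    by (simp add: chain_param_def mem_hex_vertices)
  then show ?thesis using pq(4,5) by (simp add: chain_dist_spiro_rep)
qed

text \<open>A vertex \<open>v\<close> of the spiro chain is reached either from inside its own hexagon or, when
  \<open>v = t\<^sub>j\<^sub>+\<^sub>1\<close> is the merged copy of \<open>c\<^sub>j\<^sub>+\<^sub>1\<close>, from inside hexagon \<open>j + 1\<close>.\<close>

lemma spiro_descent_in_hex:
  assumes ch: "chain_param n c t" and x: "x \<in> Sigma {..<n} (spiro_slots c)"
    and v: "v \<in> Sigma {..<n} (spiro_slots c)" and "v \<noteq> x"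
  obtains q k b' where "q \<in> hex_vertices n" "spiro_rep c t q = v" "(k, b') \<in> hex_vertices n"
    "hex_adj (k, b') q" "chain_dist 0 c t x (k, b') + 1 = chain_dist 0 c t x q"
proof -
  obtain i a where xe: "x = (i, a)" by (cases x)
  obtain j b where ve: "v = (j, b)" by (cases v)
  have bounds: "i < n" "a < 6" "j < n" "b < 6" "\<not> (1 \<le> i \<and> a = c i)" "\<not> (1 \<le> j \<and> b = c j)"
    using x v xe ve by (auto simp: spiro_slots_def)
  have xh: "x \<in> hex_vertices n" using bounds xe by (simp add: mem_hex_vertices)
  show ?thesis
  proof (cases "b = chain_entry c t x j")
    case False
    then show ?thesis
      using chain_dist_descent_in_hex[OF ch xh bounds(3,4)] that[of "(j, b)"]
        spiro_rep_id[OF v] ve bounds by (auto simp: mem_hex_vertices)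
  next
    case True
    then have ji: "j < i" "b = t (Suc j)"
      using \<open>v \<noteq> x\<close> xe ve bounds(6) by (auto simp: chain_entry_def split: if_splits)
    define q where "q = (Suc j, c (Suc j))"
    have "c (Suc j) \<noteq> chain_entry c t x (Suc j)"
    proof (cases "Suc j = i")
      case False
      then have "chain_entry c t x (Suc j) = t (Suc (Suc j))" using ji xe by (simp add: chain_entry_def)
      moreover have "Suc (Suc j) < n" using False ji bounds by simp
      ultimately show ?thesis
        using ch unfolding chain_param_def by (auto dest: spec[of _ "Suc (Suc j)"])
    qed (use bounds xe in \<open>auto simp: chain_entry_def\<close>)
    moreover have "Suc j < n" "c (Suc j) < 6" using ji bounds chain_param_range[OF ch] by auto
    ultimately obtain b' where "b' < 6" "hex_adj (Suc j, b') q"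
        "chain_dist 0 c t x (Suc j, b') + 1 = chain_dist 0 c t x q"
      using chain_dist_descent_in_hex[OF ch xh] unfolding q_def by blast
    moreover have "q \<in> hex_vertices n" "spiro_rep c t q = v"
      using \<open>Suc j < n\<close> \<open>c (Suc j) < 6\<close> ji ve by (auto simp: q_def mem_hex_vertices spiro_rep_def)
    moreover have "(Suc j, b') \<in> hex_vertices n" using \<open>Suc j < n\<close> \<open>b' < 6\<close> by (simp add: mem_hex_vertices)
    ultimately show ?thesis using that by blast
  qed
qed

lemma spiro_E_descent:
  assumes "chain_param n c t" "x \<in> Sigma {..<n} (spiro_slots c)"
    "v \<in> Sigma {..<n} (spiro_slots c)" "v \<noteq> x"
  shows "\<exists>y\<in>spiro_V n c t. spiro_E n c t y v \<and> chain_dist 0 c t x y + 1 = chain_dist 0 c t x v"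
proof -
  obtain q k b' where q: "q \<in> hex_vertices n" "spiro_rep c t q = v" "(k, b') \<in> hex_vertices n"
    "hex_adj (k, b') q" "chain_dist 0 c t x (k, b') + 1 = chain_dist 0 c t x q"
    using spiro_descent_in_hex[OF assms] .
  then have "spiro_rep c t (k, b') \<in> spiro_V n c t" "spiro_E n c t (spiro_rep c t (k, b')) v"
    unfolding spiro_V_def spiro_E_def by blast+
  moreover have "chain_dist 0 c t x (spiro_rep c t (k, b')) + 1 = chain_dist 0 c t x v"
    using q by (metis chain_dist_spiro_rep)
  ultimately show ?thesis by blast
qed

lemma spiro_gdist:
  assumes ch: "chain_param n c t"
    and "x \<in> Sigma {..<n} (spiro_slots c)" "y \<in> Sigma {..<n} (spiro_slots c)"
  shows "gdist (spiro_V n c t) (spiro_E n c t) x y = chain_dist 0 c t x y"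
proof (rule gdist_eq_potential)
  have "x \<in> hex_vertices n" using assms(2) by (auto simp: spiro_slots_def hex_vertices_def)
  then show "chain_dist 0 c t x z \<le> chain_dist 0 c t x y + 1" if "spiro_E n c t y z" for y z
    using spiro_E_chain_dist_le[OF ch _ that] by blast
  show "\<exists>y\<in>spiro_V n c t. spiro_E n c t y v \<and> chain_dist 0 c t x y + 1 = chain_dist 0 c t x v"
    if "v \<in> spiro_V n c t" "v \<noteq> x" for v
    using spiro_E_descent[OF ch assms(2)] that spiro_V_eq[OF ch] by simp
qed (use assms spiro_V_eq[OF ch] in auto)

definition dist_total :: "nat \<Rightarrow> (nat \<Rightarrow> nat) \<Rightarrow> (nat \<Rightarrow> nat) \<Rightarrow> (nat \<Rightarrow> nat set) \<Rightarrow> nat \<Rightarrow> nat" where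
  "dist_total e c t A n = (\<Sum>i<n. \<Sum>a\<in>A i. \<Sum>j<n. \<Sum>b\<in>A j. chain_dist e c t (i, a) (j, b))"

definition dist_cross :: "nat \<Rightarrow> (nat \<Rightarrow> nat) \<Rightarrow> (nat \<Rightarrow> nat) \<Rightarrow> (nat \<Rightarrow> nat set) \<Rightarrow> nat \<Rightarrow> nat" where
  "dist_cross e c t A n = (\<Sum>i<n. \<Sum>a\<in>A i. \<Sum>b\<in>A n. chain_dist e c t (i, a) (n, b))"

definition dist_diag :: "nat \<Rightarrow> (nat \<Rightarrow> nat) \<Rightarrow> (nat \<Rightarrow> nat) \<Rightarrow> (nat \<Rightarrow> nat set) \<Rightarrow> nat \<Rightarrow> nat" where
  "dist_diag e c t A n = (\<Sum>a\<in>A n. \<Sum>b\<in>A n. chain_dist e c t (n, a) (n, b))"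

lemma dist_total_Suc:
  "dist_total e c t A (Suc n) = dist_total e c t A n + 2 * dist_cross e c t A n + dist_diag e c t A n"
proof -
  let ?d = "chain_dist e c t"
  have "dist_total e c t A (Suc n) =
      (\<Sum>i<Suc n. \<Sum>a\<in>A i. \<Sum>j<n. \<Sum>b\<in>A j. ?d (i, a) (j, b)) + (\<Sum>i<Suc n. \<Sum>a\<in>A i. \<Sum>b\<in>A n. ?d (i, a) (n, b))"
    by (simp add: dist_total_def sum.distrib)
  also have "(\<Sum>i<Suc n. \<Sum>a\<in>A i. \<Sum>j<n. \<Sum>b\<in>A j. ?d (i, a) (j, b))
      = dist_total e c t A n + (\<Sum>a\<in>A n. \<Sum>j<n. \<Sum>b\<in>A j. ?d (n, a) (j, b))"
    by (simp add: dist_total_def)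
  also have "(\<Sum>a\<in>A n. \<Sum>j<n. \<Sum>b\<in>A j. ?d (n, a) (j, b)) = (\<Sum>j<n. \<Sum>a\<in>A n. \<Sum>b\<in>A j. ?d (j, b) (n, a))"
    by (subst sum.swap) (simp add: chain_dist_commute)
  also have "\<dots> = dist_cross e c t A n"
    unfolding dist_cross_def by (rule sum.cong[OF refl]) (rule sum.swap)
  also have "(\<Sum>i<Suc n. \<Sum>a\<in>A i. \<Sum>b\<in>A n. ?d (i, a) (n, b)) = dist_cross e c t A n + dist_diag e c t A n"
    by (simp add: dist_cross_def dist_diag_def)
  finally show ?thesis by simp
qed

definition gap_tail :: "(nat \<Rightarrow> nat) \<Rightarrow> (nat \<Rightarrow> nat) \<Rightarrow> nat \<Rightarrow> nat" where
  "gap_tail c t m = (\<Sum>i<m. gap_sum c t (Suc i) m)"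

definition gap_index :: "(nat \<Rightarrow> nat) \<Rightarrow> (nat \<Rightarrow> nat) \<Rightarrow> nat \<Rightarrow> nat" where
  "gap_index c t n = (\<Sum>m<n. gap_tail c t m)"

lemma gap_index_Suc: "gap_index c t (Suc n) = gap_index c t n + gap_tail c t n"
  by (simp add: gap_index_def)

lemma chain_param_Suc: "chain_param (Suc n) c t \<Longrightarrow> chain_param n c t"
  by (simp add: chain_param_def)

lemma sum_lessThan_6_add_const: "(\<Sum>a<(6::nat). f a + (k::nat)) = (\<Sum>a<6. f a) + 6 * k"
  by (simp add: sum.distrib)

lemma dist_cross_poly:
  assumes ch: "chain_param (Suc n) c t"
  shows "dist_cross e c t (\<lambda>_. {..<6}) n = (\<Sum>i<n. 108 + 36 * (e * (n - i))) + 36 * gap_tail c t n"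
proof -
  have cn: "c n < 6" using chain_param_range[OF ch] by simp
  have row: "(\<Sum>a<6. \<Sum>b<6. chain_dist e c t (i, a) (n, b))
      = 108 + 36 * (e * (n - i)) + 36 * gap_sum c t (Suc i) n" if i: "i < n" for i
  proof -
    have ti: "t (Suc i) < 6" using chain_param_range[OF ch] i by simp
    define K where "K = e * (n - i) + gap_sum c t (Suc i) n"
    have "(\<Sum>a<6. \<Sum>b<6. chain_dist e c t (i, a) (n, b)) =
          (\<Sum>a<6. \<Sum>b<6. cyc_dist (c n) b + (cyc_dist a (t (Suc i)) + K))"
      using i by (simp add: chain_dist_less K_def add.commute add.left_commute)
    also have "\<dots> = (\<Sum>a<6. 6 * cyc_dist a (t (Suc i)) + (6 * K + 9))"
      by (rule sum.cong[OF refl])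
         (subst sum_lessThan_6_add_const, subst cyc_dist_sum[OF cn], simp)
    also have "\<dots> = 108 + 36 * (e * (n - i)) + 36 * gap_sum c t (Suc i) n"
      by (simp only: sum_lessThan_6_add_const sum_distrib_left[symmetric] cyc_dist_sum'[OF ti])
         (simp add: K_def)
    finally show ?thesis .
  qed
  have "dist_cross e c t (\<lambda>_. {..<6}) n = (\<Sum>i<n. 108 + 36 * (e * (n - i)) + 36 * gap_sum c t (Suc i) n)"
    unfolding dist_cross_def using row by (intro sum.cong) auto
  then show ?thesis by (simp add: sum.distrib gap_tail_def sum_distrib_left)
qed

lemma dist_diag_poly: "dist_diag e c t (\<lambda>_. {..<6}) n = 54"
  by (simp add: dist_diag_def chain_dist_same cyc_dist_sum)

lemma dist_total_poly_difference:
  "chain_param n c t \<Longrightarrow> chain_param n c' t' \<Longrightarrow>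
   dist_total e c t (\<lambda>_. {..<6}) n + 72 * gap_index c' t' n
     = dist_total e c' t' (\<lambda>_. {..<6}) n + 72 * gap_index c t n"
proof (induction n)
  case 0
  then show ?case by (simp add: dist_total_def gap_index_def)
next
  case (Suc n)
  then show ?case
    using chain_param_Suc dist_cross_poly[OF Suc.prems(1), of e] dist_cross_poly[OF Suc.prems(2), of e]
    by (simp add: dist_total_Suc gap_index_Suc dist_diag_poly)
qed

lemma spiro_slots_0: "spiro_slots c 0 = {..<6}"
  by (auto simp: spiro_slots_def)

lemma spiro_slots_Suc: "spiro_slots c (Suc i) = {..<6} - {c (Suc i)}"
  by (auto simp: spiro_slots_def)

lemma finite_spiro_slots: "finite (spiro_slots c i)"
  by (simp add: spiro_slots_def)

lemma sum_spiro_slots_Suc: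
  "c (Suc i) < 6 \<Longrightarrow> (\<Sum>b\<in>spiro_slots c (Suc i). g b) + g (c (Suc i)) = (\<Sum>b<6. g b)"
  unfolding spiro_slots_Suc by (subst sum.remove[of "{..<6}" "c (Suc i)"]) (auto simp: add.commute)

lemma card_spiro_slots_Suc: "c (Suc i) < 6 \<Longrightarrow> card (spiro_slots c (Suc i)) = 5"
  unfolding spiro_slots_Suc by simp

lemma dist_row_spiro:
  assumes ch: "chain_param (Suc n) c t" and "i < n"
  shows "(\<Sum>a\<in>spiro_slots c i. \<Sum>b\<in>spiro_slots c n. chain_dist 0 c t (i, a) (n, b))
    = 5 * (\<Sum>a\<in>spiro_slots c i. cyc_dist a (t (Suc i)))
      + card (spiro_slots c i) * (5 * gap_sum c t (Suc i) n + 9)"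
proof -
  obtain m where m: "n = Suc m" using assms(2) by (cases n) auto
  have cn: "c n < 6" using chain_param_range[OF ch] by simp
  have row: "(\<Sum>b\<in>spiro_slots c n. chain_dist 0 c t (i, a) (n, b))
      = 5 * cyc_dist a (t (Suc i)) + (5 * gap_sum c t (Suc i) n + 9)" for a
  proof -
    have "(\<Sum>b\<in>spiro_slots c n. chain_dist 0 c t (i, a) (n, b)) = (\<Sum>b\<in>spiro_slots c n. cyc_dist (c n) b)
        + card (spiro_slots c n) * (cyc_dist a (t (Suc i)) + gap_sum c t (Suc i) n)"
      using assms(2) by (simp add: chain_dist_less sum.distrib ac_simps)
    moreover have "(\<Sum>b\<in>spiro_slots c n. cyc_dist (c n) b) = 9"
      using sum_spiro_slots_Suc[of c m "cyc_dist (c n)"] cyc_dist_sum[OF cn] cn m by simp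
    ultimately show ?thesis using card_spiro_slots_Suc[of c m] cn m by simp
  qed
  show ?thesis by (simp add: row sum.distrib sum_distrib_left)
qed

text \<open>The vertex \<open>c\<^sub>i\<^sub>+\<^sub>1\<close> missing from hexagon \<open>i + 1\<close> would contribute exactly the gap of that
  hexagon to its row, which is why the gap appears on the left.\<close>

lemma dist_row_spiro_Suc:
  assumes ch: "chain_param (Suc n) c t" and "Suc i < n"
  shows "(\<Sum>a\<in>spiro_slots c (Suc i). \<Sum>b\<in>spiro_slots c n. chain_dist 0 c t (Suc i, a) (n, b))
      + 5 * gap c t (Suc i) = 90 + 25 * gap_sum c t (Suc (Suc i)) n"
proof -
  have ci: "c (Suc i) < 6" "t (Suc (Suc i)) < 6" using chain_param_range[OF ch] assms(2) by auto
  have "(\<Sum>a\<in>spiro_slots c (Suc i). cyc_dist a (t (Suc (Suc i)))) + gap c t (Suc i) = 9"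
    using sum_spiro_slots_Suc[of c i "\<lambda>a. cyc_dist a (t (Suc (Suc i)))", OF ci(1)] cyc_dist_sum'[OF ci(2)]
    by (simp add: gap_def cyc_dist_commute)
  then show ?thesis using dist_row_spiro[OF ch assms(2)] card_spiro_slots_Suc[of c i, OF ci(1)] by simp
qed

lemma gap_sum_Suc_0: "gap_sum c t (Suc 0) (Suc m) = (\<Sum>i<m. gap c t (Suc i))"
  unfolding gap_sum_def using sum.shift_bounds_Suc_ivl[of "gap c t" 0 m]
  by (simp add: atLeast0LessThan)

lemma dist_cross_spiro:
  assumes ch: "chain_param (Suc n) c t"
  shows "dist_cross 0 c t (spiro_slots c) n = (if n = 0 then 0 else 99 + 90 * (n - 1)) + 25 * gap_tail c t n"
proof (cases n)
  case 0
  then show ?thesis by (simp add: dist_cross_def gap_tail_def)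
next
  case (Suc m)
  define R where "R i = (\<Sum>a\<in>spiro_slots c i. \<Sum>b\<in>spiro_slots c n. chain_dist 0 c t (i, a) (n, b))" for i
  have t1: "t (Suc 0) < 6" using chain_param_range[OF ch] Suc by simp
  have R0: "R 0 = 99 + 30 * gap_sum c t 1 n"
    using dist_row_spiro[OF ch, of 0] Suc by (simp add: R_def spiro_slots_0 cyc_dist_sum'[OF t1])
  have "(\<Sum>i<m. R (Suc i)) + 5 * (\<Sum>i<m. gap c t (Suc i)) = (\<Sum>i<m. 90 + 25 * gap_sum c t (Suc (Suc i)) n)"
    using dist_row_spiro_Suc[OF ch] Suc by (simp add: R_def sum_distrib_left sum.distrib[symmetric])
  moreover have "(\<Sum>i<m. gap c t (Suc i)) = gap_sum c t 1 n"
    using Suc by (simp add: gap_sum_Suc_0)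
  moreover have "gap_tail c t n = gap_sum c t 1 n + (\<Sum>i<m. gap_sum c t (Suc (Suc i)) n)"
    unfolding gap_tail_def Suc by (subst sum.lessThan_Suc_shift) simp
  moreover have "dist_cross 0 c t (spiro_slots c) n = R 0 + (\<Sum>i<m. R (Suc i))"
    unfolding dist_cross_def R_def Suc by (rule sum.lessThan_Suc_shift)
  ultimately show ?thesis using R0 Suc by (simp add: sum.distrib sum_distrib_left)
qed

lemma dist_diag_spiro:
  assumes ch: "chain_param (Suc n) c t"
  shows "dist_diag 0 c t (spiro_slots c) n = (if n = 0 then 54 else 36)"
proof (cases n)
  case 0
  then show ?thesis by (simp add: dist_diag_def chain_dist_same spiro_slots_0 cyc_dist_sum)
next
  case (Suc m)
  let ?S = "spiro_slots c (Suc m)" and ?p = "c (Suc m)"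
  have cn: "?p < 6" using chain_param_range[OF ch] Suc by simp
  have "(\<Sum>a\<in>?S. \<Sum>b\<in>?S. cyc_dist a b) + (\<Sum>a\<in>?S. cyc_dist a ?p) = (\<Sum>a\<in>?S. 9)"
    unfolding sum.distrib[symmetric]
  proof (rule sum.cong[OF refl])
    fix a assume "a \<in> ?S"
    then show "(\<Sum>b\<in>?S. cyc_dist a b) + cyc_dist a ?p = 9"
      using sum_spiro_slots_Suc[of c m "cyc_dist a", OF cn] cyc_dist_sum by (simp add: spiro_slots_def)
  qed
  moreover have "(\<Sum>a\<in>?S. cyc_dist a ?p) = 9"
    using sum_spiro_slots_Suc[of c m "\<lambda>a. cyc_dist a ?p", OF cn] cyc_dist_sum'[OF cn] by simp
  ultimately show ?thesis using card_spiro_slots_Suc[of c m, OF cn] Suc by (simp add: dist_diag_def chain_dist_same)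
qed

lemma dist_total_spiro_difference:
  "chain_param n c t \<Longrightarrow> chain_param n c' t' \<Longrightarrow>
   dist_total 0 c t (spiro_slots c) n + 50 * gap_index c' t' n
     = dist_total 0 c' t' (spiro_slots c') n + 50 * gap_index c t n"
proof (induction n)
  case 0
  then show ?case by (simp add: dist_total_def gap_index_def)
next
  case (Suc n)
  then show ?case
    using chain_param_Suc dist_cross_spiro[OF Suc.prems(1)] dist_cross_spiro[OF Suc.prems(2)]
      dist_diag_spiro[OF Suc.prems(1)] dist_diag_spiro[OF Suc.prems(2)]
    by (simp add: dist_total_Suc gap_index_Suc)
qed

lemma sum_Sigma_nested:
  assumes "finite A" "\<And>i. i \<in> A \<Longrightarrow> finite (B i)"
  shows "(\<Sum>u\<in>Sigma A B. f u) = (\<Sum>i\<in>A. \<Sum>a\<in>B i. f (i, a))"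
  using assms by (subst sum.Sigma) (auto simp: case_prod_beta)

lemma W_poly_eq_dist_total:
  assumes ch: "chain_param n c t"
  shows "W_poly n c t = dist_total 1 c t (\<lambda>_. {..<6}) n div 2"
proof -
  have V: "poly_V n = Sigma {..<n} (\<lambda>_. {..<6})"
    by (auto simp: poly_V_def hex_vertices_def)
  have "(\<Sum>u\<in>poly_V n. \<Sum>v\<in>poly_V n. gdist (poly_V n) (poly_E n c t) u v)
      = (\<Sum>u\<in>poly_V n. \<Sum>v\<in>poly_V n. chain_dist 1 c t u v)"
    using poly_gdist[OF ch] by (intro sum.cong) (auto simp: poly_V_def)
  also have "\<dots> = dist_total 1 c t (\<lambda>_. {..<6}) n"
    unfolding V dist_total_def by (simp add: sum_Sigma_nested)
  finally show ?thesis by (simp add: W_poly_def wiener_def)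
qed

lemma W_spiro_eq_dist_total:
  assumes ch: "chain_param n c t"
  shows "W_spiro n c t = dist_total 0 c t (spiro_slots c) n div 2"
proof -
  have "(\<Sum>u\<in>spiro_V n c t. \<Sum>v\<in>spiro_V n c t. gdist (spiro_V n c t) (spiro_E n c t) u v)
      = (\<Sum>u\<in>spiro_V n c t. \<Sum>v\<in>spiro_V n c t. chain_dist 0 c t u v)"
    using spiro_gdist[OF ch] by (intro sum.cong) (auto simp: spiro_V_eq[OF ch])
  also have "\<dots> = dist_total 0 c t (spiro_slots c) n"
    unfolding spiro_V_eq[OF ch] dist_total_def by (simp add: sum_Sigma_nested finite_spiro_slots)
  finally show ?thesis by (simp add: W_spiro_def wiener_def)
qed

lemma W_poly_difference:
  assumes "chain_param n c t" "chain_param n c' t'"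
  shows "W_poly n c t + 36 * gap_index c' t' n = W_poly n c' t' + 36 * gap_index c t n"
  using dist_total_poly_difference[OF assms, of 1] arg_cong[where f = "\<lambda>x. x div 2"]
  by (simp add: W_poly_eq_dist_total[OF assms(1)] W_poly_eq_dist_total[OF assms(2)])

lemma W_spiro_difference:
  assumes "chain_param n c t" "chain_param n c' t'"
  shows "W_spiro n c t + 25 * gap_index c' t' n = W_spiro n c' t' + 25 * gap_index c t n"
  using dist_total_spiro_difference[OF assms] arg_cong[where f = "\<lambda>x. x div 2"]
  by (simp add: W_spiro_eq_dist_total[OF assms(1)] W_spiro_eq_dist_total[OF assms(2)])

lemma gap_index_le:
  assumes ch: "chain_param n c t"
  shows "gap_index c t n \<le> n * (n * (3 * n))"
proof -
  have gap: "gap c t k \<le> 3" if "Suc k < n" for k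
    using chain_param_range[OF ch] that by (simp add: gap_def cyc_dist_le_3)
  have sum_le: "gap_sum c t p m \<le> 3 * n" if "m < n" for p m
  proof -
    have "gap_sum c t p m \<le> (\<Sum>k\<in>{p..<m}. 3)"
      unfolding gap_sum_def using that by (intro sum_mono gap) auto
    then show ?thesis using that by simp
  qed
  have tail_le: "gap_tail c t m \<le> n * (3 * n)" if "m < n" for m
  proof -
    have "gap_tail c t m \<le> (\<Sum>i<m. 3 * n)"
      unfolding gap_tail_def using that by (intro sum_mono) (simp add: sum_le)
    then show ?thesis using that by (simp add: order_trans)
  qed
  have "gap_index c t n \<le> (\<Sum>m<n. n * (3 * n))"
    unfolding gap_index_def by (intro sum_mono) (simp add: tail_le)
  then show ?thesis by simp
qed

lemma finite_gap_index_values: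
  "finite ((\<lambda>(c, t). gap_index c t n) ` {(c, t). chain_param n c t})"
proof (rule finite_subset)
  show "(\<lambda>(c, t). gap_index c t n) ` {(c, t). chain_param n c t} \<subseteq> {..n * (n * (3 * n))}"
    using gap_index_le by fastforce
qed simp

lemma gap_index_constant_chain:
  assumes "cyc_dist 0 D = D"
  shows "gap_index (\<lambda>_. 0) (\<lambda>_. D) n = D * gap_index (\<lambda>_. 0) (\<lambda>_. 1) n"
proof -
  have "gap (\<lambda>_. 0) (\<lambda>_. D) k = D * gap (\<lambda>_. 0) (\<lambda>_. 1) k" for k
    using assms by (simp add: gap_def cyc_dist_def)
  then show ?thesis by (simp add: gap_index_def gap_tail_def gap_sum_def sum_distrib_left)
qed

lemma gap_index_constant_chain_pos: "3 \<le> n \<Longrightarrow> 0 < gap_index (\<lambda>_. 0) (\<lambda>_. 1) n"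
proof -
  assume "3 \<le> n"
  then have "gap_tail (\<lambda>_. 0) (\<lambda>_. 1) 2 \<le> gap_index (\<lambda>_. 0) (\<lambda>_. 1) n"
    unfolding gap_index_def by (intro member_le_sum) auto
  moreover have "gap_tail (\<lambda>_. 0) (\<lambda>_. (1::nat)) 2 = 1"
    by (simp add: gap_tail_def gap_sum_def gap_def cyc_dist_def numeral_2_eq_2)
  ultimately show ?thesis by simp
qed

lemma card_gap_index_values:
  assumes "3 \<le> n"
  shows "3 \<le> card ((\<lambda>(c, t). gap_index c t n) ` {(c, t). chain_param n c t})"
proof -
  let ?G = "(\<lambda>(c, t). gap_index c t n) ` {(c, t). chain_param n c t}"
  let ?g = "gap_index (\<lambda>_. 0) (\<lambda>_. 1) n"
  have mem: "D * ?g \<in> ?G" if "cyc_dist 0 D = D" "0 < D" "D < 6" for D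
    using that gap_index_constant_chain[OF that(1), of n]
    by (intro image_eqI[of _ _ "(\<lambda>_. 0, \<lambda>_. D)"]) (auto simp: chain_param_def)
  have "{1 * ?g, 2 * ?g, 3 * ?g} \<subseteq> ?G"
    using mem[of 1] mem[of 2] mem[of 3] by (simp add: cyc_dist_def)
  moreover have "card {1 * ?g, 2 * ?g, 3 * ?g} = 3"
    using gap_index_constant_chain_pos[OF assms] by simp
  ultimately show ?thesis by (metis card_mono finite_gap_index_values)
qed

lemma sorted_list_of_set_image_strict_mono:
  assumes fin: "finite S" and mono: "strict_mono_on S g"
  shows "sorted_list_of_set (g ` S) = map g (sorted_list_of_set S)"
proof -
  let ?L = "sorted_list_of_set S"
  have "sorted_wrt (<) ?L" using sorted_list_of_set_unique[OF fin, of ?L] by simp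
  then have "sorted_wrt (<) (map g ?L)"
    by (rule sorted_wrt_map_mono) (use mono fin in \<open>auto simp: strict_mono_on_def\<close>)
  moreover have "length (map g ?L) = card (g ` S)"
    using fin strict_mono_on_imp_inj_on[OF mono] by (simp add: card_image)
  ultimately show ?thesis using sorted_list_of_set_unique[of "g ` S" "map g ?L"] fin by simp
qed

text \<open>The hypothesis avoids subtraction because the constant \<open>W - k X\<close> may be negative.\<close>

lemma kth_min_kth_max_affine_transfer:
  fixes W X :: "'p \<Rightarrow> nat"
  assumes rel: "\<And>p q. p \<in> R \<Longrightarrow> q \<in> R \<Longrightarrow> W p + k * X q = W q + k * X p"
    and "k > 0" and fin: "finite (X ` R)" and j: "j < card (X ` R)" and p: "p \<in> R"
  shows "(W p = kth_min (W ` R) j \<longleftrightarrow> X p = kth_min (X ` R) j)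
       \<and> (W p = kth_max (W ` R) j \<longleftrightarrow> X p = kth_max (X ` R) j)"
proof -
  define g where "g x = W p + k * x - k * X p" for x
  have W_eq: "W q = g (X q)" if "q \<in> R" for q
    using rel[OF that p] by (simp add: g_def)
  then have W_image: "W ` R = g ` X ` R" by (auto simp: image_image)
  have mono: "strict_mono_on (X ` R) g"
  proof (rule strict_mono_onI)
    fix r s assume "r \<in> X ` R" "s \<in> X ` R" "r < s"
    then obtain q q' where q: "q \<in> R" "q' \<in> R" "r = X q" "s = X q'" "X q < X q'" by auto
    then have "k * X q < k * X q'" using \<open>k > 0\<close> by simp
    then have "W q < W q'" using rel[OF q(1,2)] by linarith
    then show "g r < g s" using W_eq q by simp
  qed
  let ?L = "sorted_list_of_set (X ` R)"
  have "length ?L = card (X ` R)" by simp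
  then have "?L ! j \<in> X ` R" "rev ?L ! j \<in> X ` R"
    using j fin by (metis nth_mem set_sorted_list_of_set, metis length_rev nth_mem set_rev set_sorted_list_of_set)
  then show ?thesis
    using j W_eq[OF p] strict_mono_on_imp_inj_on[OF mono] p
    unfolding kth_min_def kth_max_def W_image sorted_list_of_set_image_strict_mono[OF fin mono]
    by (simp add: rev_map inj_on_eq_iff)
qed

theorem theorem4p2:
  fixes n :: nat and c t :: "nat \<Rightarrow> nat" and j :: nat
  assumes "n \<ge> 4" and "chain_param n c t" and "j < 3"
  shows "(W_poly n c t = kth_min (poly_values n) j \<longleftrightarrow>
            W_spiro n c t = kth_min (spiro_values n) j)
       \<and> (W_poly n c t = kth_max (poly_values n) j \<longleftrightarrow>
            W_spiro n c t = kth_max (spiro_values n) j)"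
proof -
  let ?R = "{(c, t). chain_param n c t}" and ?X = "\<lambda>(c, t). gap_index c t n"
  let ?Wp = "\<lambda>(c, t). W_poly n c t" and ?Ws = "\<lambda>(c, t). W_spiro n c t"
  have images: "poly_values n = ?Wp ` ?R" "spiro_values n = ?Ws ` ?R"
    by (auto simp: poly_values_def spiro_values_def)
  have "\<And>p q. p \<in> ?R \<Longrightarrow> q \<in> ?R \<Longrightarrow> ?Wp p + 36 * ?X q = ?Wp q + 36 * ?X p"
       "\<And>p q. p \<in> ?R \<Longrightarrow> q \<in> ?R \<Longrightarrow> ?Ws p + 25 * ?X q = ?Ws q + 25 * ?X p"
    by (clarsimp simp: W_poly_difference W_spiro_difference)+
  moreover have "j < card (?X ` ?R)" using card_gap_index_values[of n] assms by simp
  moreover have "(c, t) \<in> ?R" using assms(2) by simp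
  ultimately show ?thesis
    using kth_min_kth_max_affine_transfer[of ?R ?Wp 36 ?X j "(c, t)"]
      kth_min_kth_max_affine_transfer[of ?R ?Ws 25 ?X j "(c, t)"] finite_gap_index_values[of n]
    unfolding images by simp
qed

end
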